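(* Let ${\bf V}$ be the $N\times N$ random Vandermonde matrix whose phases are i.i.d. with law $\nu$, absolutely continuous on $[-\pi,\pi]$ with bounded density $f\in L^\infty([-\pi,\pi])$, and let $\lambda_N$ be the largest eigenvalue of ${\bf V}^*{\bf V}$. Then, as $N\to\infty$, $$\mathbb{E}(\lambda_N)\le\big(4\pi\|f\|_\infty(e-1)+1\big)\log N+o(1).$$
   Context: ${\bf V}=N^{-1/2}(e^{-j(k-1)\theta_l})_{1\le k,l\le N}$ with $\theta_1,\dots,\theta_N$ i.i.d. with law $\nu$. *)

theory Defs
  imports "HOL-Probability.Probability" "Jordan_Normal_Form.Schur_Decomposition"
begin

text \<open>The N x N random Vandermonde matrix V = N^(-1/2) (exp(-i (k-1) theta_l)), k,l = 1..N,
  written with 0-based row index k < N and column index l < N.\<close>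
definition vandermonde :: "nat \<Rightarrow> (nat \<Rightarrow> real) \<Rightarrow> complex mat" where
  "vandermonde N \<theta> = mat N N (\<lambda>(k, l).
      exp (- \<i> * of_nat k * complex_of_real (\<theta> l)) / complex_of_real (sqrt (real N)))"

definition largest_eigenvalue :: "complex mat \<Rightarrow> real" where
  "largest_eigenvalue A = Max {x :: real. eigenvalue A (complex_of_real x)}"

definition lambda_max :: "nat \<Rightarrow> (nat \<Rightarrow> real) \<Rightarrow> real" where
  "lambda_max N \<theta> = largest_eigenvalue (mat_adjoint (vandermonde N \<theta>) * vandermonde N \<theta>)"

definition Linf_norm :: "(real \<Rightarrow> real) \<Rightarrow> real" where
  "Linf_norm f = real_of_ereal (esssup lborel (\<lambda>x. ereal \<bar>f x\<bar>))"

end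

theory Submission
  imports Defs "HOL-Computational_Algebra.Fundamental_Theorem_Algebra"
begin

text \<open>
  The Gram matrix V* V has entries D(\<theta>_l - \<theta>_m) / N, where D(x) = \<Sum>k<N. e^(ikx) is the
  Dirichlet kernel, so by Gershgorin \<lambda>_N \<le> max_l S_l with row sums
  S_l = \<Sum>m<N. |D(\<theta>_l - \<theta>_m)| / N. Dominating the maximum by ln (\<Sum>l. e^S_l) and applying
  Jensen gives E \<lambda>_N \<le> ln (N max_l E e^S_l). Conditioning on \<theta>_l, independence factors E e^S_l
  into N - 1 copies of \<integral> exp (|D(y - s)| / N) d\<nu>(s), each at most 1 + (e - 1) |f|_\<infinity> \<integral> |D| / N
  by convexity of exp on [0, 1]. Finally |D(x)| / N \<le> min 1 (\<pi> / (N |x|)) on [-\<pi>, \<pi>] by Jordan's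
  inequality, and this majorant integrates to 2\<pi> (1 + ln 4N) / N over a period. So the N - 1
  factors contribute 2\<pi> (e - 1) |f|_\<infinity> ln N + O(1) to the logarithm, and the constant is
  absorbed for large N.
\<close>

no_notation vec_nth (infixl \<open>$\<close> 90)

section \<open>The Dirichlet kernel\<close>

lemma jordan_inequality:
  fixes y :: real
  assumes "0 \<le> y" "y \<le> pi/2"
  shows "2 * y / pi \<le> sin y"
proof -
  have "concave_on {0..pi/2} sin"
    by (rule f''_le0_imp_concave[where f'=cos and f''="\<lambda>x. - sin x"])
       (auto intro!: derivative_eq_intros simp: sin_ge_zero)
  then have "sin y \<ge> (sin (pi/2) - sin 0) / (pi/2 - 0) * (y - 0) + sin 0"
    using concave_onD_Icc'[of 0 "pi/2" sin y] assms by simp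
  then show ?thesis by (simp add: field_simps)
qed

lemma abs_sin_half_ge:
  fixes x :: real
  assumes "\<bar>x\<bar> \<le> pi"
  shows "\<bar>x\<bar> / pi \<le> \<bar>sin (x/2)\<bar>"
proof -
  have "2 * (\<bar>x\<bar>/2) / pi \<le> sin (\<bar>x\<bar>/2)"
    using assms by (intro jordan_inequality) auto
  moreover have "sin (\<bar>x\<bar>/2) = \<bar>sin (x/2)\<bar>"
    using assms sin_ge_zero[of "\<bar>x\<bar>/2"] by (cases "x \<ge> 0") (auto simp: sin_minus)
  ultimately show ?thesis by simp
qed

lemma norm_cis_minus_one: "cmod (cis x - 1) = 2 * \<bar>sin (x/2)\<bar>"
proof -
  have "cis x - 1 = cis (x/2) * (cis (x/2) - cis (-(x/2)))"
    by (simp add: algebra_simps cis_mult flip: cis_divide)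
  also have "cis (x/2) - cis (-(x/2)) = 2 * \<i> * complex_of_real (sin (x/2))"
    by (simp add: complex_eq_iff)
  finally show ?thesis by (simp add: norm_mult)
qed

definition dirichlet_mod :: "nat \<Rightarrow> real \<Rightarrow> real" where
  "dirichlet_mod N x = cmod (\<Sum>k<N. cis (real k * x)) / real N"

lemma dirichlet_mod_nonneg: "0 \<le> dirichlet_mod N x"
  by (simp add: dirichlet_mod_def)

lemma dirichlet_mod_le_one: "dirichlet_mod N x \<le> 1"
proof (cases "N = 0")
  case False
  have "cmod (\<Sum>k<N. cis (real k * x)) \<le> (\<Sum>k<N. cmod (cis (real k * x)))"
    by (rule norm_sum)
  then show ?thesis using False by (simp add: dirichlet_mod_def field_simps)
qed (simp add: dirichlet_mod_def)

lemma dirichlet_mod_le_inverse: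
  assumes "\<bar>x\<bar> \<le> pi" "x \<noteq> 0" "N > 0"
  shows "dirichlet_mod N x \<le> pi / (real N * \<bar>x\<bar>)"
proof -
  define z where "z = cis x"
  have sum_eq: "(\<Sum>k<N. cis (real k * x)) = (\<Sum>k<N. z ^ k)"
    by (rule sum.cong) (simp_all only: z_def Complex.DeMoivre)
  have "cmod (z - 1) * cmod (\<Sum>k<N. z ^ k) = cmod (z ^ N - 1)"
    by (simp add: power_diff_1_eq norm_mult)
  also have "\<dots> \<le> cmod (z ^ N) + cmod 1" by (rule norm_triangle_ineq4)
  also have "\<dots> = 2" by (simp add: z_def norm_power)
  finally have "\<bar>sin (x/2)\<bar> * cmod (\<Sum>k<N. z ^ k) \<le> 1"
    by (simp add: z_def norm_cis_minus_one)
  moreover have "\<bar>x\<bar> / pi * cmod (\<Sum>k<N. z ^ k) \<le> \<bar>sin (x/2)\<bar> * cmod (\<Sum>k<N. z ^ k)"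
    using abs_sin_half_ge[OF assms(1)] by (intro mult_right_mono) auto
  ultimately have "\<bar>x\<bar> / pi * cmod (\<Sum>k<N. z ^ k) \<le> 1"
    by linarith
  then have "cmod (\<Sum>k<N. z ^ k) \<le> pi / \<bar>x\<bar>"
    using assms(2) by (simp add: field_simps)
  then show ?thesis
    using assms(3) unfolding dirichlet_mod_def sum_eq by (simp add: divide_right_mono field_simps)
qed

lemma dirichlet_mod_periodic: "dirichlet_mod N (x + 2 * pi) = dirichlet_mod N x"
proof -
  have "cis (x + 2 * pi) = cis x"
    by (simp add: complex_eq_iff)
  then have "cis (real k * (x + 2 * pi)) = cis (real k * x)" for k
    by (metis Complex.DeMoivre)
  then show ?thesis by (simp add: dirichlet_mod_def)
qed

lemma continuous_on_dirichlet_mod: "continuous_on UNIV (dirichlet_mod N)"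
  unfolding dirichlet_mod_def[abs_def] by (cases "N = 0") (auto intro!: continuous_intros)

lemma borel_measurable_dirichlet_mod[measurable]: "dirichlet_mod N \<in> borel_measurable borel"
  by (rule borel_measurable_continuous_onI[OF continuous_on_dirichlet_mod])

definition dirichlet_majorant :: "nat \<Rightarrow> real \<Rightarrow> real" where
  "dirichlet_majorant N u = (if \<bar>u\<bar> \<le> pi / real N then 1 else pi / (real N * \<bar>u\<bar>))"

lemma dirichlet_majorant_nonneg: "0 \<le> dirichlet_majorant N u"
  by (simp add: dirichlet_majorant_def)

lemma borel_measurable_dirichlet_majorant[measurable]:
  "dirichlet_majorant N \<in> borel_measurable borel"
  unfolding dirichlet_majorant_def[abs_def] by measurable

lemma dirichlet_mod_le_majorant:
  assumes "\<bar>x\<bar> \<le> pi" "N > 0"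
  shows "dirichlet_mod N x \<le> dirichlet_majorant N x"
proof (cases "\<bar>x\<bar> \<le> pi / real N")
  case False
  then have "x \<noteq> 0" using assms(2) by auto
  then show ?thesis
    using False dirichlet_mod_le_inverse[OF assms(1) _ assms(2)] by (simp add: dirichlet_majorant_def)
qed (simp add: dirichlet_majorant_def dirichlet_mod_le_one)

lemma dirichlet_mod_le_periodic_majorant:
  assumes "\<bar>x\<bar> \<le> 2 * pi" "N > 0"
  shows "dirichlet_mod N x \<le>
    dirichlet_majorant N x + dirichlet_majorant N (x - 2 * pi) + dirichlet_majorant N (x + 2 * pi)"
proof -
  consider "\<bar>x\<bar> \<le> pi" | "x > pi" | "x < - pi" by linarith
  then have "dirichlet_mod N x \<le> dirichlet_majorant N x \<or>
      dirichlet_mod N x \<le> dirichlet_majorant N (x - 2 * pi) \<or>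
      dirichlet_mod N x \<le> dirichlet_majorant N (x + 2 * pi)"
  proof cases
    case 2
    then have "dirichlet_mod N (x - 2 * pi) \<le> dirichlet_majorant N (x - 2 * pi)"
      using assms by (intro dirichlet_mod_le_majorant) auto
    then show ?thesis using dirichlet_mod_periodic[of N "x - 2 * pi"] by simp
  next
    case 3
    then have "dirichlet_mod N (x + 2 * pi) \<le> dirichlet_majorant N (x + 2 * pi)"
      using assms by (intro dirichlet_mod_le_majorant) auto
    then show ?thesis using dirichlet_mod_periodic[of N x] by simp
  qed (use dirichlet_mod_le_majorant assms in blast)
  then show ?thesis using dirichlet_majorant_nonneg[of N] by (smt (verit))
qed

definition window_bound :: "nat \<Rightarrow> real" where
  "window_bound N = 2 * pi / real N * (1 + ln (4 * real N))"

lemma window_bound_nonneg: "N > 0 \<Longrightarrow> 0 \<le> window_bound N"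
  by (simp add: window_bound_def)

lemma nn_integral_dirichlet_majorant:
  assumes "N > 0"
  shows "(\<integral>\<^sup>+u. ennreal (dirichlet_majorant N u) * indicator {-4*pi..4*pi} u \<partial>lborel)
     \<le> ennreal (window_bound N)"
proof -
  define c where "c = pi / real N"
  have c: "0 < c" "c \<le> pi" using assms by (auto simp: c_def field_simps)
  have ln_ratio: "ln (4*pi) - ln c = ln (4 * real N)"
    using assms c by (simp add: c_def ln_div ln_mult)
  have "ennreal (dirichlet_majorant N u) * indicator {-4*pi..4*pi} u \<le>
      indicator {-c..c} u + ennreal (c / u) * indicator {c..4*pi} u
      + ennreal (c / (- u)) * indicator {-4*pi..-c} u" for u
    by (cases "\<bar>u\<bar> \<le> c"; cases "u > 0")
       (auto simp: dirichlet_majorant_def c_def split: split_indicator)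
  then have "(\<integral>\<^sup>+u. ennreal (dirichlet_majorant N u) * indicator {-4*pi..4*pi} u \<partial>lborel)
     \<le> (\<integral>\<^sup>+u. indicator {-c..c} u + ennreal (c / u) * indicator {c..4*pi} u
      + ennreal (c / (- u)) * indicator {-4*pi..-c} u \<partial>lborel)"
    by (intro nn_integral_mono)
  also have "\<dots> = (\<integral>\<^sup>+u. indicator {-c..c} u \<partial>lborel)
      + (\<integral>\<^sup>+u. ennreal (c / u) * indicator {c..4*pi} u \<partial>lborel)
      + (\<integral>\<^sup>+u. ennreal (c / (- u)) * indicator {-4*pi..-c} u \<partial>lborel)"
    by (subst nn_integral_add, simp, simp)+ (rule refl)
  also have "(\<integral>\<^sup>+u. indicator {-c..c} u \<partial>lborel) = ennreal (2*c)"
    using c by simp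
  also have "(\<integral>\<^sup>+u. ennreal (c / u) * indicator {c..4*pi} u \<partial>lborel) = ennreal (c * ln (4*pi) - c * ln c)"
    using c by (intro nn_integral_FTC_Icc[where F="\<lambda>u. c * ln u"])
       (auto intro!: derivative_eq_intros simp: field_simps)
  also have "\<dots> = ennreal (c * ln (4 * real N))"
    using ln_ratio by (simp add: right_diff_distrib[symmetric])
  also have "(\<integral>\<^sup>+u. ennreal (c / (- u)) * indicator {-4*pi..-c} u \<partial>lborel)
      = ennreal ((\<lambda>u. - c * ln (- u)) (-c) - (\<lambda>u. - c * ln (- u)) (-4*pi))"
    using c by (intro nn_integral_FTC_Icc[where F="\<lambda>u. - c * ln (- u)" and f="\<lambda>u. c / (- u)"])
       (auto intro!: derivative_eq_intros simp: field_simps)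
  also have "(\<lambda>u. - c * ln (- u)) (-c) - (\<lambda>u. - c * ln (- u)) (-4*pi) = c * ln (4 * real N)"
    using ln_ratio by (simp add: algebra_simps)
  also have "ennreal (2*c) + ennreal (c * ln (4 * real N)) + ennreal (c * ln (4 * real N)) = ennreal (window_bound N)"
    using c assms by (simp add: c_def window_bound_def flip: ennreal_plus)
       (simp add: add_divide_distrib algebra_simps)
  finally show ?thesis .
qed

lemma nn_integral_lborel_reflect:
  fixes g :: "real \<Rightarrow> ennreal"
  assumes [measurable]: "g \<in> borel_measurable borel" "A \<in> sets borel"
  shows "(\<integral>\<^sup>+s. g (a - s) * indicator A s \<partial>lborel) = (\<integral>\<^sup>+u. g u * indicator A (a - u) \<partial>lborel)"
  using nn_integral_real_affine[of "\<lambda>u. g u * indicator A (a - u)" "-1" a] by simp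

lemma nn_integral_dirichlet_mod_window:
  assumes N: "N > 0" and y: "y \<in> {-pi..pi}"
  shows "(\<integral>\<^sup>+s. ennreal (dirichlet_mod N (y - s)) * indicator {-pi..pi} s \<partial>lborel)
     \<le> ennreal (window_bound N)"
proof -
  define g where "g u = ennreal (dirichlet_majorant N u)" for u
  define W where "W = (indicator {-pi..pi} :: real \<Rightarrow> ennreal)"
  have [measurable]: "g \<in> borel_measurable borel" unfolding g_def[abs_def] by measurable
  have "(\<integral>\<^sup>+s. ennreal (dirichlet_mod N (y - s)) * W s \<partial>lborel)
      \<le> (\<integral>\<^sup>+s. g (y - s) * W s + g (y - 2*pi - s) * W s + g (y + 2*pi - s) * W s \<partial>lborel)"
  proof (intro nn_integral_mono)
    fix s
    show "ennreal (dirichlet_mod N (y - s)) * W s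
        \<le> g (y - s) * W s + g (y - 2*pi - s) * W s + g (y + 2*pi - s) * W s"
    proof (cases "s \<in> {-pi..pi}")
      case True
      then have "dirichlet_mod N (y - s)
          \<le> dirichlet_majorant N (y - s) + dirichlet_majorant N (y - 2*pi - s) + dirichlet_majorant N (y + 2*pi - s)"
        using dirichlet_mod_le_periodic_majorant[of "y - s" N] y N by (auto simp: algebra_simps)
      then show ?thesis
        using True by (simp add: g_def W_def dirichlet_majorant_nonneg flip: ennreal_plus)
    qed (simp add: W_def)
  qed
  also have "\<dots> = (\<integral>\<^sup>+s. g (y - s) * W s \<partial>lborel) + (\<integral>\<^sup>+s. g (y - 2*pi - s) * W s \<partial>lborel)
      + (\<integral>\<^sup>+s. g (y + 2*pi - s) * W s \<partial>lborel)"
    by (subst nn_integral_add, simp add: W_def, simp add: W_def)+ (rule refl)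
  also have "\<dots> = (\<integral>\<^sup>+u. g u * W (y - u) \<partial>lborel) + (\<integral>\<^sup>+u. g u * W (y - 2*pi - u) \<partial>lborel)
      + (\<integral>\<^sup>+u. g u * W (y + 2*pi - u) \<partial>lborel)"
    using nn_integral_lborel_reflect[of g "{-pi..pi}"] unfolding W_def by simp
  also have "\<dots> = (\<integral>\<^sup>+u. g u * W (y - u) + g u * W (y - 2*pi - u) + g u * W (y + 2*pi - u) \<partial>lborel)"
    by (subst nn_integral_add, simp add: W_def, simp add: W_def)+ (rule refl)
  also have "\<dots> \<le> (\<integral>\<^sup>+u. g u * indicator {-4*pi..4*pi} u \<partial>lborel)"
  proof (intro nn_integral_mono_AE)
    \<comment> \<open>the three windows overlap only at \<open>y \<plusminus> pi\<close>\<close>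
    have "AE u in lborel. u \<noteq> y - pi" "AE u in lborel. u \<noteq> y + pi"
      by (rule AE_lborel_singleton)+
    then show "AE u in lborel. g u * W (y - u) + g u * W (y - 2*pi - u) + g u * W (y + 2*pi - u)
        \<le> g u * indicator {-4*pi..4*pi} u"
      by eventually_elim (use y in \<open>auto simp: W_def split: split_indicator\<close>)
  qed
  also have "\<dots> \<le> ennreal (window_bound N)"
    unfolding g_def by (rule nn_integral_dirichlet_majorant[OF N])
  finally show ?thesis unfolding W_def .
qed

section \<open>Gershgorin bound for the Gram matrix\<close>

lemma adjoint_carrier_mat: "A \<in> carrier_mat n m \<Longrightarrow> mat_adjoint A \<in> carrier_mat m n"
  unfolding mat_adjoint_def using mat_of_rows_carrier[of n "map conjugate (cols A)"] by auto

lemma adjoint_mult_carrier_mat: "A \<in> carrier_mat n m \<Longrightarrow> mat_adjoint A * A \<in> carrier_mat m m"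
  using adjoint_carrier_mat mult_carrier_mat by blast

lemma index_adjoint_mult:
  assumes "A \<in> carrier_mat n m" "i < m" "j < m"
  shows "(mat_adjoint A * A) $$ (i, j) = (\<Sum>k<n. cnj (A $$ (k, i)) * A $$ (k, j))"
  using assms by (simp add: mat_adjoint_def scalar_prod_def mat_of_rows_index lessThan_atLeast0 cols_def)

lemma eigenvector_equations:
  fixes A :: "complex mat"
  assumes A: "A \<in> carrier_mat n n" and "eigenvalue A z"
  obtains v where "v \<in> carrier_vec n" "\<exists>j<n. v $ j \<noteq> 0"
    "\<And>i. i < n \<Longrightarrow> z * v $ i = (\<Sum>j<n. A $$ (i, j) * v $ j)"
proof -
  obtain v where v: "v \<in> carrier_vec n" "v \<noteq> 0\<^sub>v n" "A *\<^sub>v v = z \<cdot>\<^sub>v v"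
    using assms unfolding eigenvalue_def eigenvector_def by auto
  have "\<exists>j<n. v $ j \<noteq> 0"
    using v(1,2) by (metis carrier_vecD eq_vecI index_zero_vec)
  moreover have "z * v $ i = (\<Sum>j<n. A $$ (i, j) * v $ j)" if "i < n" for i
  proof -
    have "z * v $ i = (A *\<^sub>v v) $ i" using v that by simp
    also have "\<dots> = (\<Sum>j<n. A $$ (i, j) * v $ j)"
      using A v(1) that by (simp add: scalar_prod_def lessThan_atLeast0)
    finally show ?thesis .
  qed
  ultimately show ?thesis using that v(1) by blast
qed

text \<open>Gershgorin's bound, read off at a largest component of an eigenvector.\<close>
lemma eigenvalue_norm_le_row_sum:
  fixes A :: "complex mat"
  assumes A: "A \<in> carrier_mat n n" and "eigenvalue A z"
  shows "\<exists>i<n. cmod z \<le> (\<Sum>j<n. cmod (A $$ (i, j)))"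
proof -
  obtain v where v: "v \<in> carrier_vec n" "\<exists>j<n. v $ j \<noteq> 0"
    "\<And>i. i < n \<Longrightarrow> z * v $ i = (\<Sum>j<n. A $$ (i, j) * v $ j)"
    using eigenvector_equations[OF assms] by blast
  obtain j0 where j0: "j0 < n" "v $ j0 \<noteq> 0" using v(2) by blast
  obtain i where "is_arg_min (\<lambda>j. - cmod (v $ j)) (\<lambda>j. j \<in> {..<n}) i"
    using ex_is_arg_min_if_finite[of "{..<n}"] j0(1) by blast
  then have i: "i < n" and max: "\<And>j. j < n \<Longrightarrow> cmod (v $ j) \<le> cmod (v $ i)"
    by (auto simp: is_arg_min_linorder)
  have pos: "cmod (v $ i) > 0" using max[OF j0(1)] j0(2) by (smt (verit) zero_less_norm_iff)
  have "cmod z * cmod (v $ i) = cmod (\<Sum>j<n. A $$ (i, j) * v $ j)"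
    using v(3)[OF i] by (metis norm_mult)
  also have "\<dots> \<le> (\<Sum>j<n. cmod (A $$ (i, j)) * cmod (v $ i))"
    by (rule order_trans[OF norm_sum sum_mono]) (simp add: norm_mult max mult_left_mono)
  also have "\<dots> = (\<Sum>j<n. cmod (A $$ (i, j))) * cmod (v $ i)"
    by (rule sum_distrib_right[symmetric])
  finally have "cmod z \<le> (\<Sum>j<n. cmod (A $$ (i, j)))"
    using pos by simp
  then show ?thesis using i by blast
qed

definition hermitian_mat :: "complex mat \<Rightarrow> bool" where
  "hermitian_mat A \<longleftrightarrow> (\<forall>i<dim_row A. \<forall>j<dim_row A. cnj (A $$ (i, j)) = A $$ (j, i))"

lemma hermitian_adjoint_mult:
  assumes "A \<in> carrier_mat n m"
  shows "hermitian_mat (mat_adjoint A * A)"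
  using adjoint_mult_carrier_mat[OF assms] index_adjoint_mult[OF assms]
  by (auto simp: hermitian_mat_def mult.commute)

lemma hermitian_eigenvalue_real:
  assumes A: "A \<in> carrier_mat n n" and herm: "hermitian_mat A" and "eigenvalue A z"
  shows "Im z = 0"
proof -
  obtain v where v: "v \<in> carrier_vec n" "\<exists>j<n. v $ j \<noteq> 0"
    "\<And>i. i < n \<Longrightarrow> z * v $ i = (\<Sum>j<n. A $$ (i, j) * v $ j)"
    using eigenvector_equations[OF A assms(3)] by blast
  define Q where "Q = (\<Sum>i<n. \<Sum>j<n. cnj (v $ i) * A $$ (i, j) * v $ j)"
  define R where "R = (\<Sum>i<n. (cmod (v $ i))\<^sup>2)"
  have "Q = (\<Sum>i<n. cnj (v $ i) * (z * v $ i))"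
    unfolding Q_def using v(3) by (simp add: sum_distrib_left mult.assoc)
  also have "\<dots> = z * complex_of_real R"
    unfolding R_def of_real_sum sum_distrib_left complex_norm_square by (simp add: mult_ac)
  finally have QR: "Q = z * complex_of_real R" .
  have "cnj Q = (\<Sum>i<n. \<Sum>j<n. v $ i * A $$ (j, i) * cnj (v $ j))"
    using herm A unfolding Q_def hermitian_mat_def by simp
  also have "\<dots> = Q"
    unfolding Q_def by (subst sum.swap) (simp add: mult_ac)
  finally have "Im Q = 0" by (metis cnj.sel(2) neg_equal_zero)
  obtain j0 where j0: "j0 < n" "v $ j0 \<noteq> 0" using v(2) by blast
  have "0 < (cmod (v $ j0))\<^sup>2" using j0 by simp
  also have "\<dots> \<le> R" unfolding R_def using j0 by (intro member_le_sum) auto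
  finally show ?thesis using \<open>Im Q = 0\<close> QR by simp
qed

lemma finite_real_eigenvalues:
  assumes A: "A \<in> carrier_mat n n"
  shows "finite {x :: real. eigenvalue A (complex_of_real x)}"
proof -
  have "char_poly A \<noteq> 0"
    using degree_monic_char_poly[OF A] by auto
  then have "finite {z. poly (char_poly A) z = 0}" by (rule poly_roots_finite)
  moreover have "{x. eigenvalue A (complex_of_real x)} \<subseteq> Re ` {z. poly (char_poly A) z = 0}"
    using eigenvalue_root_char_poly[OF A] by (force intro: image_eqI[of _ Re])
  ultimately show ?thesis using finite_subset by blast
qed

lemma hermitian_has_real_eigenvalue:
  assumes A: "A \<in> carrier_mat n n" and herm: "hermitian_mat A" and "n > 0"
  shows "\<exists>x :: real. eigenvalue A (complex_of_real x)"
proof -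
  have "degree (char_poly A) = n" using degree_monic_char_poly[OF A] by auto
  then have "\<not> constant (poly (char_poly A))" using \<open>n > 0\<close> by (simp add: constant_degree)
  then obtain z where "poly (char_poly A) z = 0" using fundamental_theorem_of_algebra by blast
  then have ev: "eigenvalue A z" using eigenvalue_root_char_poly[OF A] by auto
  then have "z = complex_of_real (Re z)"
    using hermitian_eigenvalue_real[OF A herm] by (simp add: complex_eq_iff)
  then show ?thesis using ev by metis
qed

lemma hermitian_largest_eigenvalue_le_row_sum:
  assumes A: "A \<in> carrier_mat n n" and herm: "hermitian_mat A" and "n > 0"
  shows "\<exists>i<n. largest_eigenvalue A \<le> (\<Sum>j<n. cmod (A $$ (i, j)))"
proof -
  let ?E = "{x :: real. eigenvalue A (complex_of_real x)}"
  have "Max ?E \<in> ?E"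
    using finite_real_eigenvalues[OF A] hermitian_has_real_eigenvalue[OF assms] by (intro Max_in) auto
  then obtain i where "i < n" "cmod (complex_of_real (Max ?E)) \<le> (\<Sum>j<n. cmod (A $$ (i, j)))"
    using eigenvalue_norm_le_row_sum[OF A] by blast
  then show ?thesis unfolding largest_eigenvalue_def by auto
qed

lemma vandermonde_carrier_mat: "vandermonde N \<theta> \<in> carrier_mat N N"
  by (simp add: vandermonde_def)

lemma vandermonde_gram_index:
  assumes "l < N" "m < N"
  shows "(mat_adjoint (vandermonde N \<theta>) * vandermonde N \<theta>) $$ (l, m)
    = (\<Sum>k<N. cis (real k * (\<theta> l - \<theta> m))) / of_nat N"
proof -
  have exp_cis: "exp (- \<i> * of_nat k * complex_of_real t) = cis (- (real k * t))" for k t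
    by (simp add: cis_conv_exp algebra_simps)
  have sqrt_sq: "complex_of_real (sqrt (real N)) * complex_of_real (sqrt (real N)) = of_nat N"
    by (simp flip: of_real_mult)
  have "cnj (vandermonde N \<theta> $$ (k, l)) * vandermonde N \<theta> $$ (k, m)
      = cis (real k * (\<theta> l - \<theta> m)) / of_nat N" if "k < N" for k
    using that assms unfolding vandermonde_def exp_cis
    by (simp add: cis_cnj cis_mult sqrt_sq algebra_simps flip: times_divide_times_eq)
  then show ?thesis
    by (simp add: index_adjoint_mult[OF vandermonde_carrier_mat assms] sum_divide_distrib)
qed

definition gram_row_sum :: "nat \<Rightarrow> (nat \<Rightarrow> real) \<Rightarrow> nat \<Rightarrow> real" where
  "gram_row_sum N \<theta> l = (\<Sum>m<N. dirichlet_mod N (\<theta> l - \<theta> m))"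

lemma lambda_max_le_gram_row_sum:
  assumes "N > 0"
  shows "\<exists>l<N. lambda_max N \<theta> \<le> gram_row_sum N \<theta> l"
proof -
  let ?G = "mat_adjoint (vandermonde N \<theta>) * vandermonde N \<theta>"
  have G: "?G \<in> carrier_mat N N" "hermitian_mat ?G"
    using adjoint_mult_carrier_mat hermitian_adjoint_mult vandermonde_carrier_mat by blast+
  have "cmod (?G $$ (l, m)) = dirichlet_mod N (\<theta> l - \<theta> m)" if "l < N" "m < N" for l m
    using that by (simp add: vandermonde_gram_index dirichlet_mod_def norm_divide)
  then show ?thesis
    using hermitian_largest_eigenvalue_le_row_sum[OF G assms]
    unfolding lambda_max_def gram_row_sum_def by (metis (no_types, lifting) lessThan_iff sum.cong)
qed

section \<open>Expected largest eigenvalue\<close>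

lemma (in prob_space) integral_le_ln_sum_exp:
  fixes X :: "'a \<Rightarrow> real" and S :: "nat \<Rightarrow> 'a \<Rightarrow> real"
  assumes "n > 0"
    and dominated: "\<And>x. \<exists>l<n. X x \<le> S l x"
    and S_nonneg: "\<And>l x. l < n \<Longrightarrow> 0 \<le> S l x"
    and integrable: "\<And>l. l < n \<Longrightarrow> integrable M (\<lambda>x. exp (S l x))"
    and bound: "\<And>l. l < n \<Longrightarrow> (\<integral>x. exp (S l x) \<partial>M) \<le> B"
  shows "(\<integral>x. X x \<partial>M) \<le> ln (real n * B)"
proof -
  define C where "C = real n * B"
  have "1 \<le> (\<integral>x. exp (S 0 x) \<partial>M)"
    using integral_mono[OF integrable_const integrable[of 0], of 1] S_nonneg[of 0] \<open>n > 0\<close>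
    by (simp add: prob_space)
  then have "1 \<le> B" using bound[of 0] \<open>n > 0\<close> by simp
  then have C: "1 \<le> C" using \<open>n > 0\<close> by (simp add: C_def order_trans[OF _ mult_mono[of 1 _ 1]])
  define R where "R x = (ln C - 1) + (\<Sum>l<n. exp (S l x)) / C" for x
  \<comment> \<open>\<open>R\<close> majorizes \<open>ln (\<Sum>l<n. exp (S l x))\<close> by the tangent of \<open>ln\<close> at \<open>C\<close>\<close>
  have X_le_R: "X x \<le> R x" for x
  proof -
    obtain l where l: "l < n" "X x \<le> S l x" using dominated by blast
    let ?s = "\<Sum>l<n. exp (S l x)"
    have s: "0 < ?s" using \<open>n > 0\<close> by (intro sum_pos) auto
    have "S l x \<le> ln ?s"
      using l(1) s by (subst ln_ge_iff) (auto intro!: member_le_sum)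
    also have "ln ?s = ln C + ln (?s / C)" using C s by (simp add: ln_div)
    also have "ln (?s / C) \<le> ?s / C - 1" using C s by (intro ln_le_minus_one) simp
    finally show ?thesis using l(2) unfolding R_def by linarith
  qed
  have int_sum: "integrable M (\<lambda>x. \<Sum>l<n. exp (S l x))"
    using integrable by (intro Bochner_Integration.integrable_sum) auto
  then have int_R: "integrable M R"
    unfolding R_def by (intro Bochner_Integration.integrable_add integrable_divide_zero) auto
  show ?thesis
  proof (cases "integrable M X")
    case True
    have "(\<integral>x. X x \<partial>M) \<le> (\<integral>x. R x \<partial>M)"
      by (intro integral_mono True int_R X_le_R)
    also have "\<dots> = (ln C - 1) + (\<integral>x. (\<Sum>l<n. exp (S l x)) \<partial>M) / C"
      unfolding R_def using int_sum
      by (subst Bochner_Integration.integral_add) (auto simp: prob_space)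
    also have "(\<integral>x. (\<Sum>l<n. exp (S l x)) \<partial>M) = (\<Sum>l<n. (\<integral>x. exp (S l x) \<partial>M))"
      using integrable by (intro Bochner_Integration.integral_sum) auto
    also have "(ln C - 1) + (\<Sum>l<n. (\<integral>x. exp (S l x) \<partial>M)) / C \<le> (ln C - 1) + (\<Sum>l<n. B) / C"
      using C by (intro add_left_mono divide_right_mono sum_mono bound) auto
    also have "\<dots> = ln C" using C \<open>n > 0\<close> \<open>1 \<le> B\<close> by (simp add: C_def)
    finally show ?thesis unfolding C_def .
  next
    case False
    \<comment> \<open>the junk value \<open>0\<close> is harmless because \<open>S_nonneg\<close> forces \<open>C \<ge> 1\<close>\<close>
    then show ?thesis using C by (simp add: not_integrable_integral_eq C_def)
  qed
qed

lemma exp_le_chord: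
  fixes h :: real
  assumes "0 \<le> h" "h \<le> 1"
  shows "exp h \<le> 1 + (exp 1 - 1) * h"
proof -
  have "exp ((1 - h) *\<^sub>R 0 + h *\<^sub>R 1) \<le> (1 - h) * exp 0 + h * exp 1"
    using assms by (intro convex_onD[OF exp_convex]) auto
  then show ?thesis by (simp add: algebra_simps)
qed

lemma exp_gram_row_sum_update_le:
  assumes "l < N"
  shows "exp (gram_row_sum N (\<theta>(l := y)) l)
    \<le> exp 1 * (\<Prod>m\<in>{..<N} - {l}. exp (dirichlet_mod N (y - \<theta> m)))"
proof -
  have "gram_row_sum N (\<theta>(l := y)) l = dirichlet_mod N 0 + (\<Sum>m\<in>{..<N} - {l}. dirichlet_mod N (y - \<theta> m))"
    unfolding gram_row_sum_def using assms by (simp add: sum.remove[of "{..<N}" l])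
  then have "exp (gram_row_sum N (\<theta>(l := y)) l)
      = exp (dirichlet_mod N 0) * (\<Prod>m\<in>{..<N} - {l}. exp (dirichlet_mod N (y - \<theta> m)))"
    by (simp add: exp_add exp_sum)
  also have "\<dots> \<le> exp 1 * (\<Prod>m\<in>{..<N} - {l}. exp (dirichlet_mod N (y - \<theta> m)))"
    by (intro mult_right_mono prod_nonneg) (auto simp: dirichlet_mod_le_one)
  finally show ?thesis .
qed

lemma gram_row_sum_nonneg: "0 \<le> gram_row_sum N \<theta> l"
  unfolding gram_row_sum_def by (intro sum_nonneg dirichlet_mod_nonneg)

lemma gram_row_sum_le: "gram_row_sum N \<theta> l \<le> real N"
  using sum_mono[of "{..<N}" "\<lambda>m. dirichlet_mod N (\<theta> l - \<theta> m)" "\<lambda>_. 1"]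
  by (simp add: gram_row_sum_def dirichlet_mod_le_one)

locale bounded_phase_density =
  fixes f :: "real \<Rightarrow> real"
  assumes f_measurable[measurable]: "f \<in> borel_measurable lborel"
    and f_nonneg: "\<And>x. f x \<ge> 0"
    and f_support: "\<And>x. x \<notin> {-pi..pi} \<Longrightarrow> f x = 0"
    and prob_space_density: "prob_space (density lborel f)"
    and f_bounded: "\<exists>B. \<forall>x. \<bar>f x\<bar> \<le> B"
begin

abbreviation phase_law :: "real measure" where
  "phase_law \<equiv> density lborel f"

lemma AE_le_Linf_norm: "AE x in lborel. f x \<le> Linf_norm f"
proof -
  obtain B where B: "\<And>x. \<bar>f x\<bar> \<le> B" using f_bounded by blast
  define E where "E = esssup lborel (\<lambda>x. ereal \<bar>f x\<bar>)"
  have "E \<le> ereal B" unfolding E_def using B by (intro esssup_I) auto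
  moreover have AE: "AE x in lborel. ereal \<bar>f x\<bar> \<le> E" unfolding E_def by (rule esssup_AE)
  moreover have "E \<noteq> - \<infinity>"
  proof
    assume "E = - \<infinity>"
    with AE have "AE x in (lborel::real measure). False" by simp
    then have "ae_filter (lborel::real measure) = bot" using trivial_limit_def by blast
    then have "emeasure (lborel::real measure) (space lborel) = 0"
      by (simp add: ae_filter_eq_bot_iff)
    then show False by simp
  qed
  ultimately have "E = ereal (Linf_norm f)"
    unfolding Linf_norm_def E_def[symmetric] by (cases E) auto
  from AE show ?thesis by eventually_elim (use \<open>E = ereal (Linf_norm f)\<close> in auto)
qed

lemma Linf_norm_pos: "Linf_norm f > 0"
proof (rule ccontr)
  assume "\<not> ?thesis"
  then have "Linf_norm f \<le> 0" by simp
  from AE_le_Linf_norm have "AE x in lborel. ennreal (f x) * indicator UNIV x = 0"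
    by eventually_elim (use f_nonneg \<open>Linf_norm f \<le> 0\<close> in \<open>auto simp: antisym\<close>)
  then have "emeasure phase_law UNIV = 0"
    by (simp add: emeasure_density nn_integral_0_iff_AE del: indicator_UNIV)
  then show False using prob_space.emeasure_space_1[OF prob_space_density] by simp
qed

lemma AE_phase_law_in_interval: "AE y in phase_law. y \<in> {-pi..pi}"
proof -
  have "AE y in lborel. 0 < ennreal (f y) \<longrightarrow> y \<in> {-pi..pi}"
    by (rule AE_I2) (metis f_support ennreal_0 less_irrefl)
  then show ?thesis by (subst AE_density) auto
qed

lemma nn_integral_dirichlet_mod_le:
  assumes "N > 0" "y \<in> {-pi..pi}"
  shows "(\<integral>\<^sup>+s. ennreal (dirichlet_mod N (y - s)) \<partial>phase_law)
    \<le> ennreal (Linf_norm f) * ennreal (window_bound N)"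
proof -
  have "(\<integral>\<^sup>+s. ennreal (dirichlet_mod N (y - s)) \<partial>phase_law)
      = (\<integral>\<^sup>+s. ennreal (f s) * ennreal (dirichlet_mod N (y - s)) \<partial>lborel)"
    by (subst nn_integral_density) auto
  also have "\<dots> \<le> (\<integral>\<^sup>+s. ennreal (Linf_norm f) * (ennreal (dirichlet_mod N (y - s)) * indicator {-pi..pi} s) \<partial>lborel)"
    using AE_le_Linf_norm
  proof (intro nn_integral_mono_AE, eventually_elim)
    case (elim s)
    then show ?case
      using f_support[of s] by (cases "s \<in> {-pi..pi}") (auto intro!: mult_right_mono ennreal_leI)
  qed
  also have "\<dots> = ennreal (Linf_norm f) * (\<integral>\<^sup>+s. ennreal (dirichlet_mod N (y - s)) * indicator {-pi..pi} s \<partial>lborel)"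
    by (subst nn_integral_cmult) auto
  also have "\<dots> \<le> ennreal (Linf_norm f) * ennreal (window_bound N)"
    by (intro mult_left_mono nn_integral_dirichlet_mod_window assms) auto
  finally show ?thesis .
qed

lemma nn_integral_exp_dirichlet_mod_le:
  assumes "N > 0" "y \<in> {-pi..pi}"
  shows "(\<integral>\<^sup>+s. ennreal (exp (dirichlet_mod N (y - s))) \<partial>phase_law)
    \<le> ennreal (exp ((exp 1 - 1) * Linf_norm f * window_bound N))"
proof -
  let ?K = "Linf_norm f" and ?J = "window_bound N"
  have nonneg: "0 \<le> exp 1 - (1::real)" "0 \<le> ?K" "0 \<le> ?J"
    using Linf_norm_pos window_bound_nonneg[OF assms(1)] by auto
  have "(\<integral>\<^sup>+s. ennreal (exp (dirichlet_mod N (y - s))) \<partial>phase_law)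
      \<le> (\<integral>\<^sup>+s. 1 + ennreal (exp 1 - 1) * ennreal (dirichlet_mod N (y - s)) \<partial>phase_law)"
  proof (intro nn_integral_mono)
    fix s
    have "ennreal (exp (dirichlet_mod N (y - s))) \<le> ennreal (1 + (exp 1 - 1) * dirichlet_mod N (y - s))"
      by (intro ennreal_leI exp_le_chord dirichlet_mod_nonneg dirichlet_mod_le_one)
    then show "ennreal (exp (dirichlet_mod N (y - s))) \<le> 1 + ennreal (exp 1 - 1) * ennreal (dirichlet_mod N (y - s))"
      using nonneg(1) dirichlet_mod_nonneg[of N] by (simp add: ennreal_plus ennreal_mult)
  qed
  also have "\<dots> = 1 + ennreal (exp 1 - 1) * (\<integral>\<^sup>+s. ennreal (dirichlet_mod N (y - s)) \<partial>phase_law)"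
    using prob_space.emeasure_space_1[OF prob_space_density]
    by (subst nn_integral_add) (auto simp: nn_integral_cmult)
  also have "\<dots> \<le> 1 + ennreal (exp 1 - 1) * (ennreal ?K * ennreal ?J)"
    by (intro add_left_mono mult_left_mono nn_integral_dirichlet_mod_le assms) auto
  also have "\<dots> = ennreal (1 + (exp 1 - 1) * ?K * ?J)"
  proof -
    have "ennreal (exp 1 - 1) * (ennreal ?K * ennreal ?J) = ennreal ((exp 1 - 1) * ?K * ?J)"
      using nonneg by (simp add: mult.assoc flip: ennreal_mult)
    moreover have "0 \<le> (exp 1 - 1) * ?K * ?J" using nonneg by simp
    ultimately show ?thesis by (simp add: ennreal_plus)
  qed
  also have "\<dots> \<le> ennreal (exp ((exp 1 - 1) * ?K * ?J))"
    by (intro ennreal_leI exp_ge_add_one_self)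
  finally show ?thesis .
qed

lemma measurable_gram_row_sum[measurable]:
  assumes "l < N"
  shows "(\<lambda>\<theta>. gram_row_sum N \<theta> l) \<in> borel_measurable (PiM {..<N} (\<lambda>_. phase_law))"
proof -
  have "(\<lambda>\<theta>. \<theta> i) \<in> borel_measurable (PiM {..<N} (\<lambda>_. phase_law))" if "i < N" for i
    using measurable_component_singleton[of i "{..<N}" "\<lambda>_. phase_law"] that
    by (simp add: measurable_def)
  then show ?thesis
    unfolding gram_row_sum_def using assms
    by (intro borel_measurable_sum measurable_compose[OF _ borel_measurable_dirichlet_mod]
        borel_measurable_diff) auto
qed

lemma product_sigma_finite_phase_law: "product_sigma_finite (\<lambda>_::nat. phase_law)"
  by (simp add: product_sigma_finite_def prob_space_imp_sigma_finite[OF prob_space_density])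

lemma nn_integral_exp_gram_row_sum_update_le:
  assumes "l < N"
  shows "(\<integral>\<^sup>+x. ennreal (exp (gram_row_sum N (x(l := y)) l)) \<partial>PiM ({..<N} - {l}) (\<lambda>_. phase_law))
    \<le> ennreal (exp 1) * (\<Prod>m\<in>{..<N} - {l}. \<integral>\<^sup>+s. ennreal (exp (dirichlet_mod N (y - s))) \<partial>phase_law)"
proof -
  let ?P = "PiM ({..<N} - {l}) (\<lambda>_. phase_law)"
  have "(\<integral>\<^sup>+x. ennreal (exp (gram_row_sum N (x(l := y)) l)) \<partial>?P)
      \<le> (\<integral>\<^sup>+x. ennreal (exp 1) * (\<Prod>m\<in>{..<N} - {l}. ennreal (exp (dirichlet_mod N (y - x m)))) \<partial>?P)"
  proof (intro nn_integral_mono)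
    fix x :: "nat \<Rightarrow> real"
    have "ennreal (exp (gram_row_sum N (x(l := y)) l))
        \<le> ennreal (exp 1 * (\<Prod>m\<in>{..<N} - {l}. exp (dirichlet_mod N (y - x m))))"
      by (intro ennreal_leI exp_gram_row_sum_update_le assms)
    then show "ennreal (exp (gram_row_sum N (x(l := y)) l))
        \<le> ennreal (exp 1) * (\<Prod>m\<in>{..<N} - {l}. ennreal (exp (dirichlet_mod N (y - x m))))"
      by (simp add: ennreal_mult prod_nonneg prod_ennreal)
  qed
  also have "\<dots> = ennreal (exp 1) * (\<integral>\<^sup>+x. (\<Prod>m\<in>{..<N} - {l}. ennreal (exp (dirichlet_mod N (y - x m)))) \<partial>?P)"
    by (rule nn_integral_cmult) measurable
  also have "(\<integral>\<^sup>+x. (\<Prod>m\<in>{..<N} - {l}. ennreal (exp (dirichlet_mod N (y - x m)))) \<partial>?P)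
      = (\<Prod>m\<in>{..<N} - {l}. \<integral>\<^sup>+s. ennreal (exp (dirichlet_mod N (y - s))) \<partial>phase_law)"
    by (rule product_sigma_finite.product_nn_integral_prod[OF product_sigma_finite_phase_law]) auto
  finally show ?thesis .
qed

lemma nn_integral_exp_gram_row_sum_le:
  assumes N: "N > 0" and l: "l < N"
  shows "(\<integral>\<^sup>+\<theta>. ennreal (exp (gram_row_sum N \<theta> l)) \<partial>PiM {..<N} (\<lambda>_. phase_law))
     \<le> ennreal (exp 1 * exp ((exp 1 - 1) * Linf_norm f * window_bound N) ^ (N - 1))"
proof -
  let ?c = "(exp 1 - 1) * Linf_norm f * window_bound N"
  define I where "I = {..<N} - {l}"
  have I: "finite I" "l \<notin> I" "insert l I = {..<N}" "card I = N - 1"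
    using l by (auto simp: I_def)
  have "(\<integral>\<^sup>+\<theta>. ennreal (exp (gram_row_sum N \<theta> l)) \<partial>PiM {..<N} (\<lambda>_. phase_law))
      = (\<integral>\<^sup>+y. (\<integral>\<^sup>+x. ennreal (exp (gram_row_sum N (x(l := y)) l)) \<partial>PiM I (\<lambda>_. phase_law)) \<partial>phase_law)"
    unfolding I(3)[symmetric] using l
    by (intro product_sigma_finite.product_nn_integral_insert_rev[OF product_sigma_finite_phase_law I(1,2)])
       (simp add: I(3))
  also have "\<dots> \<le> (\<integral>\<^sup>+y. ennreal (exp 1 * exp ?c ^ (N - 1)) \<partial>phase_law)"
    using AE_phase_law_in_interval
  proof (intro nn_integral_mono_AE, eventually_elim)
    case (elim y)
    have "(\<integral>\<^sup>+x. ennreal (exp (gram_row_sum N (x(l := y)) l)) \<partial>PiM I (\<lambda>_. phase_law))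
        \<le> ennreal (exp 1) * (\<Prod>m\<in>I. \<integral>\<^sup>+s. ennreal (exp (dirichlet_mod N (y - s))) \<partial>phase_law)"
      unfolding I_def by (rule nn_integral_exp_gram_row_sum_update_le[OF l])
    also have "\<dots> \<le> ennreal (exp 1) * (\<Prod>m\<in>I. ennreal (exp ?c))"
      by (intro mult_left_mono prod_mono_ennreal nn_integral_exp_dirichlet_mod_le N elim) auto
    also have "\<dots> = ennreal (exp 1 * exp ?c ^ (N - 1))"
      using I(4) by (simp add: ennreal_power ennreal_mult)
    finally show ?case .
  qed
  also have "\<dots> = ennreal (exp 1 * exp ?c ^ (N - 1))"
    using prob_space.emeasure_space_1[OF prob_space_density] by simp
  finally show ?thesis .
qed

lemma integral_lambda_max_le:
  assumes N: "N > 0"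
  shows "(\<integral>\<theta>. lambda_max N \<theta> \<partial>PiM {..<N} (\<lambda>_. phase_law))
    \<le> ln (real N * (exp 1 * exp ((exp 1 - 1) * Linf_norm f * window_bound N) ^ (N - 1)))"
proof -
  let ?P = "PiM {..<N} (\<lambda>_. phase_law)"
  let ?B = "exp 1 * exp ((exp 1 - 1) * Linf_norm f * window_bound N) ^ (N - 1)"
  interpret P: prob_space ?P by (rule prob_space_PiM) (rule prob_space_density)
  have integrable: "integrable ?P (\<lambda>\<theta>. exp (gram_row_sum N \<theta> l))" if "l < N" for l
    using that by (intro P.integrable_const_bound[where B="exp (real N)"]) (auto simp: gram_row_sum_le)
  have "(\<integral>\<theta>. exp (gram_row_sum N \<theta> l) \<partial>?P) \<le> ?B" if "l < N" for l
  proof -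
    have "ennreal (\<integral>\<theta>. exp (gram_row_sum N \<theta> l) \<partial>?P) = (\<integral>\<^sup>+\<theta>. ennreal (exp (gram_row_sum N \<theta> l)) \<partial>?P)"
      by (rule nn_integral_eq_integral[OF integrable[OF that], symmetric]) simp
    also have "\<dots> \<le> ennreal ?B" by (rule nn_integral_exp_gram_row_sum_le[OF N that])
    finally show ?thesis by (simp add: ennreal_le_iff)
  qed
  then show ?thesis
    using lambda_max_le_gram_row_sum[OF N] gram_row_sum_nonneg integrable
    by (intro P.integral_le_ln_sum_exp[OF N, where S="\<lambda>l \<theta>. gram_row_sum N \<theta> l"]) auto
qed

end

lemma ln_gram_bound_le_eventually:
  fixes K :: real
  assumes "K > 0"
  shows "\<forall>\<^sub>F N in sequentially.
    ln (real N * (exp 1 * exp ((exp 1 - 1) * K * window_bound N) ^ (N - 1)))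
      \<le> (4 * pi * K * (exp 1 - 1) + 1) * ln (real N)"
proof -
  define a where "a = 2 * pi * (exp 1 - 1) * K"
  have "a > 0" using assms by (simp add: a_def)
  have "filterlim (\<lambda>N. ln (real N)) at_top sequentially"
    by (rule filterlim_compose[OF ln_at_top filterlim_real_sequentially])
  then have "\<forall>\<^sub>F N in sequentially. (1 + a * (1 + ln 4)) / a \<le> ln (real N)"
    by (simp add: filterlim_at_top)
  moreover have "\<forall>\<^sub>F N in sequentially. N > (0::nat)" by (rule eventually_gt_at_top)
  ultimately show ?thesis
  proof eventually_elim
    case (elim N)
    \<comment> \<open>the constant \<open>1 + a (1 + ln 4)\<close> is absorbed into a second copy of \<open>a ln N\<close>\<close>
    then have "1 + a * (1 + ln 4) \<le> a * ln (real N)"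
      using \<open>a > 0\<close> by (simp add: field_simps)
    have "real (N - 1) * window_bound N \<le> real N * window_bound N"
      using window_bound_nonneg[of N] elim by (intro mult_right_mono) auto
    also have "\<dots> = 2 * pi * (1 + ln 4 + ln (real N))"
      using elim by (simp add: window_bound_def ln_mult)
    finally have "(exp 1 - 1) * K * (real (N - 1) * window_bound N)
        \<le> (exp 1 - 1) * K * (2 * pi * (1 + ln 4 + ln (real N)))"
      using assms by (intro mult_left_mono) auto
    then have "real (N - 1) * ((exp 1 - 1) * K * window_bound N) \<le> a * (1 + ln 4 + ln (real N))"
      unfolding a_def by (simp add: algebra_simps)
    moreover have "ln (real N * (exp 1 * exp ((exp 1 - 1) * K * window_bound N) ^ (N - 1)))
        = ln (real N) + 1 + real (N - 1) * ((exp 1 - 1) * K * window_bound N)"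
      using elim by (simp add: ln_mult ln_realpow)
    ultimately show ?case
      using \<open>1 + a * (1 + ln 4) \<le> a * ln (real N)\<close> unfolding a_def by (simp add: algebra_simps)
  qed
qed

theorem corollary1:
  fixes f :: "real \<Rightarrow> real"
  assumes f_meas: "f \<in> borel_measurable lborel"
    and f_nonneg: "\<And>x. f x \<ge> 0"
    and f_supp: "\<And>x. x \<notin> {-pi..pi} \<Longrightarrow> f x = 0"
    and f_prob: "prob_space (density lborel f)"
    and f_bdd: "\<exists>B. \<forall>x. \<bar>f x\<bar> \<le> B"
  shows "\<exists>g :: nat \<Rightarrow> real. g \<longlonglongrightarrow> 0 \<and>
    (\<forall>\<^sub>F N in sequentially.
       (\<integral>\<theta>. lambda_max N \<theta> \<partial>(PiM {..<N} (\<lambda>_. density lborel f)))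
         \<le> (4 * pi * Linf_norm f * (exp 1 - 1) + 1) * ln (real N) + g N)"
proof -
  interpret bounded_phase_density f
    using assms by (simp add: bounded_phase_density_def)
  have "\<forall>\<^sub>F N in sequentially.
       (\<integral>\<theta>. lambda_max N \<theta> \<partial>(PiM {..<N} (\<lambda>_. density lborel f)))
         \<le> (4 * pi * Linf_norm f * (exp 1 - 1) + 1) * ln (real N)"
    using ln_gram_bound_le_eventually[OF Linf_norm_pos] eventually_gt_at_top[of 0]
  proof eventually_elim
    case (elim N)
    then show ?case using integral_lambda_max_le[of N] by linarith
  qed
  then show ?thesis by (intro exI[of _ "\<lambda>_. 0"]) simp
qed

end
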